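(* If $G$ is a torsion abelian group containing elements $a$ and $b$ of distinct prime orders $p$ and $q$, then $\mathbb{P}(G)$ has exactly one element.
   Context: An abelian group is regarded as a $\mathbb{Z}$-module. For a $\mathbb{Z}$-module $M$ let $M^\circ=M\setminus\{0\}$; define $x\sim'y$ on $M^\circ$ if there exist $m\in M$ and $r,s\in\mathbb{Z}$ with $x=rm$, $y=sm$; let $\sim$ be the equivalence relation generated by $\sim'$; and let $\mathbb{P}(M)=M^\circ/\sim$. *)

theory Defs
  imports "HOL-Algebra.Algebra"
begin

text \<open>An abelian group is written multiplicatively as a HOL-Algebra comm_group;
  the Z-module action r m is the integer power m [^] r.\<close>

definition punctured :: "('a, 'b) monoid_scheme \<Rightarrow> 'a set" where
  "punctured G = carrier G - {\<one>\<^bsub>G\<^esub>}"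

definition sim_pre :: "('a, 'b) monoid_scheme \<Rightarrow> ('a \<times> 'a) set" where
  "sim_pre G = {(x, y). x \<in> punctured G \<and> y \<in> punctured G \<and>
      (\<exists>m \<in> carrier G. \<exists>(r::int) (s::int). x = m [^]\<^bsub>G\<^esub> r \<and> y = m [^]\<^bsub>G\<^esub> (s::int))}"

definition sim_rel :: "('a, 'b) monoid_scheme \<Rightarrow> ('a \<times> 'a) set" where
  "sim_rel G = Id_on (punctured G) \<union> (sim_pre G \<union> (sim_pre G)\<inverse>)\<^sup>+"

definition proj_space :: "('a, 'b) monoid_scheme \<Rightarrow> 'a set set" where
  "proj_space G = punctured G // sim_rel G"

end

theory Submission
  imports Defs
begin

text \<open>Bezout for the coprime orders \<open>ord a\<close> and \<open>ord b\<close> shows that \<open>a\<close> and \<open>b\<close> are integer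
  powers of \<open>a b\<close>, so the two are directly related. Every nontrivial torsion element \<open>x\<close> is
  related to a power of itself of some prime order \<open>r\<close>, and \<open>r\<close> differs from \<open>ord a\<close> or from
  \<open>ord b\<close>; hence by the same argument it is related to \<open>a\<close> or \<open>b\<close>, and so everything lies in
  the class of \<open>a\<close>.\<close>

lemma (in comm_group) int_pow_mult_eq_left_if_coprime_ord:
  assumes u: "u \<in> carrier G" and v: "v \<in> carrier G"
    and coprime: "coprime (ord u) (ord v)"
  shows "\<exists>k::int. (u \<otimes> v) [^] k = u"
proof -
  have "gcd (int (ord u)) (int (ord v)) = 1"
    using coprime by (simp flip: coprime_iff_gcd_eq_1)
  then obtain i j :: int where bezout: "i * int (ord u) + j * int (ord v) = 1"
    using bezout_int by metis
  have "u [^] (j * int (ord v)) = u [^] (1::int)"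
    using int_pow_eq[OF u] bezout by (metis add_diff_cancel_right' dvd_triv_right)
  moreover have "v [^] (j * int (ord v)) = \<one>"
    using int_pow_eq_id[OF v] by simp
  ultimately have "(u \<otimes> v) [^] (j * int (ord v)) = u"
    using u v by (simp add: int_pow_distrib)
  then show ?thesis ..
qed

lemma sim_preI:
  assumes "x \<in> punctured G" "y \<in> punctured G" "m \<in> carrier G"
    and "m [^]\<^bsub>G\<^esub> (r::int) = x" "m [^]\<^bsub>G\<^esub> (s::int) = y"
  shows "(x, y) \<in> sim_pre G"
  unfolding sim_pre_def using assms by blast

lemma sim_pre_subset_sim_rel: "sim_pre G \<subseteq> sim_rel G"
  unfolding sim_rel_def by auto

lemma equiv_sim_rel: "equiv (punctured G) (sim_rel G)"
proof -
  let ?S = "sim_pre G \<union> (sim_pre G)\<inverse>"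
  have "?S \<subseteq> punctured G \<times> punctured G"
    unfolding sim_pre_def by auto
  then have "?S\<^sup>+ \<subseteq> punctured G \<times> punctured G"
    by (rule trancl_subset_Sigma)
  moreover have "sym (?S\<^sup>+)"
    by (rule sym_trancl) (auto simp: sym_def)
  ultimately show ?thesis
    unfolding sim_rel_def equiv_def refl_on_def sym_def trans_def
    by (blast intro: trancl_trans)
qed

lemma sim_rel_trans: "(x, y) \<in> sim_rel G \<Longrightarrow> (y, z) \<in> sim_rel G \<Longrightarrow> (x, z) \<in> sim_rel G"
  using equiv_sim_rel by (metis equiv_def transD)

lemma (in comm_group) sim_rel_if_coprime_ord:
  assumes u: "u \<in> punctured G" and v: "v \<in> punctured G"
    and coprime: "coprime (ord u) (ord v)"
  shows "(u, v) \<in> sim_rel G"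
proof -
  have uc: "u \<in> carrier G" and vc: "v \<in> carrier G"
    using u v by (auto simp: punctured_def)
  obtain i :: int where i: "(u \<otimes> v) [^] i = u"
    using int_pow_mult_eq_left_if_coprime_ord[OF uc vc coprime] ..
  obtain j :: int where "(v \<otimes> u) [^] j = v"
    using int_pow_mult_eq_left_if_coprime_ord[OF vc uc] coprime by (auto simp: coprime_commute)
  then have j: "(u \<otimes> v) [^] j = v"
    using uc vc by (simp add: m_comm)
  have "(u, v) \<in> sim_pre G"
    using sim_preI[OF u v _ i j] uc vc by simp
  then show ?thesis
    using sim_pre_subset_sim_rel by blast
qed

lemma (in group) sim_rel_prime_ord_pow:
  assumes x: "x \<in> punctured G" and finite_ord: "ord x \<noteq> 0"
  shows "\<exists>y \<in> punctured G. (x, y) \<in> sim_rel G \<and> Factorial_Ring.prime (ord y)"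
proof -
  have xc: "x \<in> carrier G" and "x \<noteq> \<one>"
    using x by (auto simp: punctured_def)
  then have "ord x \<noteq> 1"
    using ord_eq_1 by simp
  then obtain r where r: "Factorial_Ring.prime r" "r dvd ord x"
    using prime_factor_nat by blast
  then obtain k where k: "ord x = r * k"
    by blast
  have "k dvd ord x" "k \<noteq> 0"
    using k finite_ord by auto
  then have ord_y: "ord (x [^] k) = r"
    using ord_pow[OF xc] k by simp
  have y: "x [^] k \<in> punctured G"
    using ord_y r ord_eq_1[of "x [^] k"] xc by (auto simp: punctured_def)
  have "x [^] (1::int) = x" "x [^] int k = x [^] k"
    using xc by (simp_all add: int_pow_int)
  then have "(x, x [^] k) \<in> sim_pre G"
    by (rule sim_preI[OF x y xc])
  then show ?thesis
    using y ord_y r sim_pre_subset_sim_rel by blast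
qed

lemma (in comm_group) sim_rel_if_prime_ord:
  assumes a: "a \<in> punctured G" and b: "b \<in> punctured G"
    and coprime_ab: "coprime (ord a) (ord b)"
    and y: "y \<in> punctured G" and prime_y: "Factorial_Ring.prime (ord y)"
  shows "(y, a) \<in> sim_rel G"
proof (cases "ord y dvd ord a")
  case True
  then have "\<not> ord y dvd ord b"
    using coprime_ab prime_y coprime_common_divisor not_prime_unit by blast
  then have "coprime (ord y) (ord b)"
    by (rule prime_imp_coprime[OF prime_y])
  then have "(y, b) \<in> sim_rel G" "(b, a) \<in> sim_rel G"
    using a b y coprime_ab sim_rel_if_coprime_ord by (auto simp: coprime_commute)
  then show ?thesis
    by (rule sim_rel_trans)
next
  case False
  then have "coprime (ord y) (ord a)"
    by (rule prime_imp_coprime[OF prime_y])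
  then show ?thesis
    using a y sim_rel_if_coprime_ord by blast
qed

lemma quotient_eq_singleton:
  assumes "equiv A r" "a \<in> A" "\<forall>x \<in> A. (x, a) \<in> r"
  shows "A // r = {r `` {a}}"
proof -
  have "r `` {x} = r `` {a}" if "x \<in> A" for x
    using assms(3) that by (intro equiv_class_eq[OF assms(1)]) blast
  then show ?thesis
    using assms(2) unfolding quotient_def by blast
qed

theorem theorem4p10:
  fixes G :: "('a, 'b) monoid_scheme" and a b :: 'a and p q :: nat
  assumes "comm_group G"
    and "\<forall>x \<in> carrier G. \<exists>n::nat. n > 0 \<and> x [^]\<^bsub>G\<^esub> n = \<one>\<^bsub>G\<^esub>"
    and "a \<in> carrier G" and "b \<in> carrier G"
    and "Factorial_Ring.prime p" and "Factorial_Ring.prime q" and "p \<noteq> q"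
    and "group.ord G a = p" and "group.ord G b = q"
  shows "card (proj_space G) = 1"
proof -
  interpret comm_group G by (rule assms(1))
  have a: "a \<in> punctured G" and b: "b \<in> punctured G"
    using assms(3-9) ord_eq_1[of a] ord_eq_1[of b] by (auto simp: punctured_def)
  have "coprime (ord a) (ord b)"
    using assms(5-9) by (simp add: primes_coprime)
  note prime_ord_to_a = sim_rel_if_prime_ord[OF a b this]
  have "(x, a) \<in> sim_rel G" if x: "x \<in> punctured G" for x
  proof -
    have "x \<in> carrier G"
      using x by (simp add: punctured_def)
    then obtain n :: nat where "n > 0" "x [^]\<^bsub>G\<^esub> n = \<one>\<^bsub>G\<^esub>"
      using assms(2) by blast
    then have "ord x \<noteq> 0"
      using pow_eq_id[OF \<open>x \<in> carrier G\<close>] by auto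
    then obtain y where y: "y \<in> punctured G" "Factorial_Ring.prime (ord y)"
      and xy: "(x, y) \<in> sim_rel G"
      using sim_rel_prime_ord_pow[OF x] by blast
    show ?thesis
      using xy prime_ord_to_a[OF y] by (rule sim_rel_trans)
  qed
  then have "proj_space G = {sim_rel G `` {a}}"
    unfolding proj_space_def by (intro quotient_eq_singleton[OF equiv_sim_rel a]) blast
  then show ?thesis
    by simp
qed

end
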